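(* Let $k$ be a field of characteristic not $2$ or $3$, let $\mathcal{A}\in k^{n+1}\otimes\operatorname{Sym}_2k^{m+1}$ and let $\mathfrak{C}\subseteq\mathbb{P}^m$ be its Cayley variety. If $\ell$ is a secant line of $\mathfrak{C}$ not contained in $\mathfrak{C}$, then $\psi(\ell)$ is a single point of $\widehat{\mathbb{P}}^n$. Conversely, if $\ell$ is a line such that $\psi(\ell)$ is a single point, then $\ell$ is a secant line of $\mathfrak{C}$.
   Context: $\mathcal{A}$ is an $(n+1)$-tuple $(A_0,\dots,A_n)$ of symmetric $(m+1)\times(m+1)$ matrices; $\mathfrak{C}=Z(\mathbf{y}^TA_0\mathbf{y},\dots,\mathbf{y}^TA_n\mathbf{y})$; $\psi:\mathbb{P}^m\dashrightarrow\widehat{\mathbb{P}}^n$, $y\mapsto(y^TA_0y:\dots:y^TA_ny)$, and $\psi(\ell)$ means the image of the points of $\ell$ where $\psi$ is defined. A secant line of $\mathfrak{C}$ is a line meeting $\mathfrak{C}$ in a subscheme of length at least $2$, i.e. either through two distinct points of $\mathfrak{C}$ or tangent to $\mathfrak{C}$ at a point. *)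

theory Defs
  imports "HOL-Analysis.Analysis"
begin

text \<open>Points of P^m are represented by nonzero vectors in k^(m+1) = 'a^'m (index type 'm
has m+1 elements); points of the dual P^n by nonzero vectors indexed by 'n (n+1 elements).\<close>

definition symmetric_mat :: "'a^'m^'m \<Rightarrow> bool" where
  "symmetric_mat M \<longleftrightarrow> (\<forall>i j. M $ i $ j = M $ j $ i)"

definition qform :: "('a::comm_ring_1)^'m^'m \<Rightarrow> 'a^'m \<Rightarrow> 'a" where
  "qform M y = (\<Sum>i\<in>UNIV. \<Sum>j\<in>UNIV. y $ i * M $ i $ j * y $ j)"

definition psi :: "('n \<Rightarrow> ('a::comm_ring_1)^'m^'m) \<Rightarrow> 'a^'m \<Rightarrow> 'a^'n" where
  "psi As y = (\<chi> i. qform (As i) y)"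

definition indep2 :: "('a::field)^'m \<Rightarrow> 'a^'m \<Rightarrow> bool" where
  "indep2 p r \<longleftrightarrow> (\<forall>s t. s *s p + t *s r = 0 \<longrightarrow> s = 0 \<and> t = 0)"

definition line_pts :: "('a::field)^'m \<Rightarrow> 'a^'m \<Rightarrow> ('a^'m) set" where
  "line_pts p r = {s *s p + t *s r | s t. s \<noteq> 0 \<or> t \<noteq> 0}"

text \<open>psi(l): images of the points of l where psi is defined (representatives)\<close>
definition psi_image :: "('n \<Rightarrow> ('a::field)^'m^'m) \<Rightarrow> 'a^'m \<Rightarrow> 'a^'m \<Rightarrow> ('a^'n) set" where
  "psi_image As p r = {psi As y | y. y \<in> line_pts p r \<and> psi As y \<noteq> 0}"

definition single_proj_point :: "(('a::field)^'n) set \<Rightarrow> bool" where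
  "single_proj_point S \<longleftrightarrow> S \<noteq> {} \<and> 0 \<notin> S \<and>
     (\<forall>x\<in>S. \<forall>z\<in>S. \<exists>c. c \<noteq> 0 \<and> x = c *s z)"

definition line_in_cayley :: "('n \<Rightarrow> ('a::field)^'m^'m) \<Rightarrow> 'a^'m \<Rightarrow> 'a^'m \<Rightarrow> bool" where
  "line_in_cayley As p r \<longleftrightarrow> (\<forall>y\<in>line_pts p r. \<forall>i. qform (As i) y = 0)"

text \<open>Secant line: the scheme-theoretic intersection of l = P^1 (coordinates (s:t)) with C,
cut out by the binary quadratic forms Q_i(s,t) = (sp+tr)^T A_i (sp+tr), has length >= 2,
i.e. it contains a length-2 subscheme of P^1, i.e. the divisor Z(f) of a nonzero binary
quadratic form f = f0 s^2 + f1 s t + f2 t^2 over k; equivalently every Q_i lies in the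
degree-2 part of the ideal (f), i.e. is a scalar multiple of f.\<close>
definition secant_line :: "('n \<Rightarrow> ('a::field)^'m^'m) \<Rightarrow> 'a^'m \<Rightarrow> 'a^'m \<Rightarrow> bool" where
  "secant_line As p r \<longleftrightarrow>
    (\<exists>f0 f1 f2 :: 'a. (f0 \<noteq> 0 \<or> f1 \<noteq> 0 \<or> f2 \<noteq> 0) \<and>
       (\<forall>i. \<exists>c. \<forall>s t. qform (As i) (s *s p + t *s r) = c * (f0 * s^2 + f1 * s * t + f2 * t^2)))"

end

theory Submission
  imports Defs
begin

text \<open>Restricted to the line \<open>s p + t r\<close>, each \<open>y\<^sup>T A\<^sub>i y\<close> is a binary quadratic form \<open>Q\<^sub>i(s,t)\<close>.
  With the scheme-theoretic notion of secant line, \<open>\<ell>\<close> is secant exactly when all \<open>Q\<^sub>i\<close> are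
  multiples \<open>c\<^sub>i f\<close> of one nonzero binary quadratic \<open>f\<close>. Then \<open>\<psi>(s p + t r) = f(s,t) c\<close>, so every
  defined value of \<open>\<psi>\<close> on \<open>\<ell>\<close> is a multiple of the fixed vector \<open>c\<close>, and some value is defined
  because \<open>\<ell>\<close> is not contained in the Cayley variety. Conversely, if all defined values of \<open>\<psi>\<close>
  on \<open>\<ell>\<close> are multiples of one vector \<open>z\<close> with \<open>z\<^sub>j \<noteq> 0\<close>, then \<open>Q\<^sub>i = (z\<^sub>i / z\<^sub>j) Q\<^sub>j\<close>, and \<open>f = Q\<^sub>j\<close> is
  nonzero since it does not vanish where \<open>z\<close> is attained.\<close>

definition qform_cross :: "('a::comm_ring_1)^'m^'m \<Rightarrow> 'a^'m \<Rightarrow> 'a^'m \<Rightarrow> 'a" where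
  "qform_cross M p r = (\<Sum>i\<in>UNIV. \<Sum>j\<in>UNIV. p $ i * M $ i $ j * r $ j + r $ i * M $ i $ j * p $ j)"

lemma qform_line_expand:
  fixes M :: "('a::field)^'m::finite^'m"
  shows "qform M (s *s p + t *s r) = qform M p * s^2 + qform_cross M p r * s * t + qform M r * t^2"
  unfolding qform_def qform_cross_def
  by (simp add: sum_distrib_left sum.distrib[symmetric] algebra_simps power2_eq_square)

lemma psi_nth [simp]: "psi As y $ i = qform (As i) y"
  by (simp add: psi_def)

lemma psi_zero [simp]: "psi As 0 = 0"
  by (simp add: vec_eq_iff qform_def)

lemma single_proj_point_if_multiples:
  fixes S :: "(('a::field)^'n) set"
  assumes "S \<noteq> {}" and "0 \<notin> S" and "\<And>x. x \<in> S \<Longrightarrow> \<exists>c. x = c *s v"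
  shows "single_proj_point S"
  unfolding single_proj_point_def
proof (intro conjI ballI)
  fix x z assume "x \<in> S" "z \<in> S"
  with assms obtain a b where x: "x = a *s v" "x \<noteq> 0" and z: "z = b *s v" "z \<noteq> 0"
    by metis
  then have "a \<noteq> 0" "b \<noteq> 0" by auto
  with x z show "\<exists>c. c \<noteq> 0 \<and> x = c *s z"
    by (intro exI[of _ "a / b"]) (simp add: vec_eq_iff)
qed (use assms in auto)

lemma psi_image_nonempty_if_not_line_in_cayley:
  assumes "\<not> line_in_cayley As p r"
  shows "psi_image As p r \<noteq> {}"
proof -
  from assms obtain y i where "y \<in> line_pts p r" and "qform (As i) y \<noteq> 0"
    unfolding line_in_cayley_def by blast
  then have "psi As y \<in> psi_image As p r"
    unfolding psi_image_def by (auto simp: vec_eq_iff)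
  then show ?thesis by blast
qed

lemma single_proj_point_if_secant_line:
  fixes As :: "'n::finite \<Rightarrow> ('a::field)^'m::finite^'m"
  assumes "secant_line As p r" and "\<not> line_in_cayley As p r"
  shows "single_proj_point (psi_image As p r)"
proof -
  from assms(1) obtain f0 f1 f2 :: 'a and c :: "'n \<Rightarrow> 'a"
    where Q: "\<And>i s t. qform (As i) (s *s p + t *s r) = c i * (f0 * s^2 + f1 * s * t + f2 * t^2)"
    unfolding secant_line_def by metis
  have "\<exists>a. x = a *s (\<chi> i. c i)" if "x \<in> psi_image As p r" for x
  proof -
    from that obtain s t where "x = psi As (s *s p + t *s r)"
      unfolding psi_image_def line_pts_def by blast
    then have "x = (f0 * s^2 + f1 * s * t + f2 * t^2) *s (\<chi> i. c i)"
      by (simp add: vec_eq_iff Q mult.commute distrib_left)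
    then show ?thesis by blast
  qed
  moreover have "0 \<notin> psi_image As p r"
    unfolding psi_image_def by auto
  ultimately show ?thesis
    using psi_image_nonempty_if_not_line_in_cayley[OF assms(2)]
    by (intro single_proj_point_if_multiples)
qed

lemma psi_line_multiple_if_single_proj_point:
  assumes "single_proj_point (psi_image As p r)" and "z \<in> psi_image As p r"
  shows "\<exists>c. psi As (s *s p + t *s r) = c *s z"
proof (cases "psi As (s *s p + t *s r) = 0")
  case True
  then show ?thesis by (intro exI[of _ 0]) simp
next
  case False
  then have "s \<noteq> 0 \<or> t \<noteq> 0" by auto
  with False have "psi As (s *s p + t *s r) \<in> psi_image As p r"
    unfolding psi_image_def line_pts_def by blast
  with assms show ?thesis
    unfolding single_proj_point_def by blast
qed

lemma vec_nth_ratio_if_multiple: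
  fixes x z :: "('a::field)^'n"
  assumes "x = c *s z" and "z $ j \<noteq> 0"
  shows "x $ i = (z $ i / z $ j) * x $ j"
  using assms by simp

lemma secant_line_if_single_proj_point:
  fixes As :: "'n::finite \<Rightarrow> ('a::field)^'m::finite^'m"
  assumes single: "single_proj_point (psi_image As p r)"
  shows "secant_line As p r"
proof -
  from single obtain z where z: "z \<in> psi_image As p r"
    unfolding single_proj_point_def by blast
  then obtain s0 t0 where z_psi: "z = psi As (s0 *s p + t0 *s r)" and "z \<noteq> 0"
    unfolding psi_image_def line_pts_def by blast
  then obtain j where zj: "z $ j \<noteq> 0"
    by (metis vec_eq_iff zero_index)
  define f0 f1 f2 where "f0 = qform (As j) p" and "f1 = qform_cross (As j) p r"
    and "f2 = qform (As j) r"
  have Qj: "qform (As j) (s *s p + t *s r) = f0 * s^2 + f1 * s * t + f2 * t^2" for s t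
    unfolding f0_def f1_def f2_def qform_line_expand ..
  have Qi: "qform (As i) (s *s p + t *s r) = (z $ i / z $ j) * qform (As j) (s *s p + t *s r)"
    for i s t
  proof -
    obtain c where "psi As (s *s p + t *s r) = c *s z"
      using psi_line_multiple_if_single_proj_point[OF single z] by blast
    from vec_nth_ratio_if_multiple[OF this zj, of i] show ?thesis by (simp only: psi_nth)
  qed
  have "f0 \<noteq> 0 \<or> f1 \<noteq> 0 \<or> f2 \<noteq> 0"
  proof (rule ccontr)
    assume "\<not> ?thesis"
    then have "z $ j = 0" by (simp add: z_psi Qj)
    with zj show False ..
  qed
  moreover have "\<exists>c. \<forall>s t. qform (As i) (s *s p + t *s r) = c * (f0 * s^2 + f1 * s * t + f2 * t^2)"
    for i
    by (intro exI[of _ "z $ i / z $ j"] allI) (simp only: Qi[of i] Qj)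
  ultimately show ?thesis
    unfolding secant_line_def by blast
qed

theorem lemma5p1p1:
  fixes As :: "'n::finite \<Rightarrow> ('a::field)^'m::finite^'m"
    and p r :: "'a^'m"
  assumes char2: "(2::'a) \<noteq> 0" and char3: "(3::'a) \<noteq> 0"
    and sym: "\<forall>i. symmetric_mat (As i)"
    and line: "indep2 p r"
  shows "(secant_line As p r \<and> \<not> line_in_cayley As p r \<longrightarrow> single_proj_point (psi_image As p r))
       \<and> (single_proj_point (psi_image As p r) \<longrightarrow> secant_line As p r)"
  using single_proj_point_if_secant_line secant_line_if_single_proj_point by blast

end
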